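(* Let $\Sigma\subset\mathbb{C}$ be closed and let $\Omega\subset\mathbb{C}$ be a bounded, open, simply connected set containing a point $z_0\in\mathbb{C}\setminus\Sigma$. For every compact set $K\subset\Omega$ there exists a smooth map $\kappa:\Omega\setminus\{z_0\}\to\Omega\setminus\{z_0\}$ with $\kappa(z)=z$ for all $z\in\Omega$ in a neighborhood of $\partial\Omega$, such that $\kappa(\Sigma\cap\Omega)\cap K=\emptyset$.
   Context: In the paper, $\Sigma$ is the closure of the range of a symbol $p$ and $\Omega\Subset\mathbb{C}\setminus\Sigma_\infty$; only the stated properties are used. *)

theory Defs
  imports "HOL-Analysis.Analysis"
begin

text \<open>Smoothness (C-infinity) of a map of the plane, viewed as a map of real 2-space
  (complex numbers as a real normed vector space), on an open set S:
  f belongs to a family of functions, each continuous and (Frechet) differentiable on S,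
  closed under taking directional derivatives in every direction v. Equivalently, all
  iterated directional derivatives of all orders exist and are continuous.\<close>
definition smooth_on :: "complex set \<Rightarrow> (complex \<Rightarrow> complex) \<Rightarrow> bool" where
  "smooth_on S f \<longleftrightarrow>
     (\<exists>F :: (complex \<Rightarrow> complex) set. f \<in> F \<and>
        (\<forall>g\<in>F. continuous_on S g \<and>
           (\<forall>v. \<exists>h\<in>F. \<forall>x\<in>S. \<exists>D. (g has_derivative D) (at x) \<and> h x = D v)))"

end

theory Submission
  imports Defs "HOL-Complex_Analysis.Complex_Analysis" "HOL-Computational_Algebra.Polynomial"
begin

text \<open>
  A Riemann map \<open>F\<close> of \<open>Omega\<close> onto the unit disc with \<open>F z0 = 0\<close> carries the compact set \<open>K\<close>
  into a disc of some radius \<open>r < 1\<close>. Let \<open>\<Psi>\<close> be a smooth radial map of the punctured disc into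
  itself that pushes every point to modulus at least \<open>r\<close> and is the identity near the unit circle.
  Then \<open>\<kappa> = F\<inverse> \<circ> \<Psi> \<circ> F\<close> is the identity near the frontier of \<open>Omega\<close>, and since \<open>Sigma\<close> misses
  \<open>z0\<close>, the set \<open>\<kappa> (Sigma \<inter> Omega)\<close> lies in the preimage of the annulus \<open>r \<le> |w| < 1\<close>, which
  avoids \<open>K\<close>. For \<open>\<Psi>\<close> take \<open>w \<surd>(m/|w|\<^sup>2)\<close>, where \<open>m\<close> interpolates between \<open>r\<^sup>2\<close> and \<open>|w|\<^sup>2\<close>
  by a smooth step built from \<open>exp (-1/x)\<close>. Smoothness holds for holomorphic and real-linear maps
  and is preserved by sums, products and composition, which covers every ingredient.
\<close>

section \<open>Smooth maps of the plane\<close>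

definition directional_derivative_on ::
    "complex set \<Rightarrow> complex \<Rightarrow> (complex \<Rightarrow> complex) \<Rightarrow> (complex \<Rightarrow> complex) \<Rightarrow> bool" where
  "directional_derivative_on S v g h \<longleftrightarrow> (\<forall>x\<in>S. \<exists>D. (g has_derivative D) (at x) \<and> h x = D v)"

definition smooth_family :: "complex set \<Rightarrow> (complex \<Rightarrow> complex) set \<Rightarrow> bool" where
  "smooth_family S F \<longleftrightarrow>
     (\<forall>g\<in>F. continuous_on S g \<and> (\<forall>v. \<exists>h\<in>F. directional_derivative_on S v g h))"

lemma directional_derivative_onI:
  assumes "\<And>x. x \<in> S \<Longrightarrow> (g has_derivative D x) (at x)" "\<And>x. x \<in> S \<Longrightarrow> h x = D x v"
  shows "directional_derivative_on S v g h"
  using assms unfolding directional_derivative_on_def by blast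

lemma directional_derivative_onE:
  assumes "directional_derivative_on S v g h"
  obtains D where "\<And>x. x \<in> S \<Longrightarrow> (g has_derivative D x) (at x)" "\<And>x. x \<in> S \<Longrightarrow> h x = D x v"
  using assms unfolding directional_derivative_on_def by metis

lemma smooth_on_iff_smooth_family: "smooth_on S f \<longleftrightarrow> (\<exists>F. f \<in> F \<and> smooth_family S F)"
  unfolding smooth_on_def smooth_family_def directional_derivative_on_def by blast

lemma smooth_onI: "f \<in> F \<Longrightarrow> smooth_family S F \<Longrightarrow> smooth_on S f"
  unfolding smooth_on_iff_smooth_family by blast

lemma smooth_familyI:
  assumes "\<And>g v. g \<in> F \<Longrightarrow> \<exists>h\<in>F. directional_derivative_on S v g h"
  shows "smooth_family S F"
  unfolding smooth_family_def
proof (intro ballI conjI allI)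
  fix g assume "g \<in> F"
  then obtain h where "directional_derivative_on S 0 g h" using assms by blast
  then show "continuous_on S g"
    unfolding directional_derivative_on_def
    by (meson continuous_at_imp_continuous_on has_derivative_continuous)
qed (use assms in blast)

lemma smooth_family_smooth_on: "smooth_family S {f. smooth_on S f}"
  unfolding smooth_family_def smooth_on_iff_smooth_family by blast

lemma smooth_on_directional_derivative:
  "smooth_on S f \<Longrightarrow> \<exists>h. smooth_on S h \<and> directional_derivative_on S v f h"
  using smooth_family_smooth_on unfolding smooth_family_def by blast

lemma smooth_on_linear_plus_const:
  assumes "bounded_linear L"
  shows "smooth_on S (\<lambda>x. L x + c)"
proof -
  define A :: "(complex \<Rightarrow> complex) set" where "A = {\<lambda>x. L x + c |L c. bounded_linear L}"
  have "smooth_family S A"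
  proof (rule smooth_familyI)
    fix g v assume "g \<in> A"
    then obtain L c where L: "bounded_linear L" and g: "g = (\<lambda>x. L x + c)"
      unfolding A_def by blast
    have "directional_derivative_on S v g (\<lambda>x. 0 + L v)"
      unfolding g
      using has_derivative_add_const[OF bounded_linear.has_derivative[OF L has_derivative_ident]]
      by (intro directional_derivative_onI[where D="\<lambda>x. L"]) simp_all
    moreover have "(\<lambda>x. 0 + L v) \<in> A"
      unfolding A_def
      by (intro CollectI exI[of _ "\<lambda>x. 0"] exI[of _ "L v"]) (simp add: bounded_linear_zero)
    ultimately show "\<exists>h\<in>A. directional_derivative_on S v g h"
      by blast
  qed
  moreover have "(\<lambda>x. L x + c) \<in> A"
    unfolding A_def using assms by blast
  ultimately show ?thesis
    unfolding smooth_on_iff_smooth_family by blast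
qed

lemma bounded_linear_imp_smooth_on: "bounded_linear L \<Longrightarrow> smooth_on S L"
  using smooth_on_linear_plus_const[where c=0] by simp

lemma smooth_on_const: "smooth_on S (\<lambda>x. c)"
  using smooth_on_linear_plus_const[OF bounded_linear_zero] by simp

lemma holomorphic_on_imp_smooth_on:
  assumes "f holomorphic_on S" "open S"
  shows "smooth_on S f"
proof -
  have "smooth_family S {g. g holomorphic_on S}"
  proof (rule smooth_familyI)
    fix g v assume "g \<in> {g. g holomorphic_on S}"
    then have g: "g holomorphic_on S" by simp
    have "directional_derivative_on S v g (\<lambda>x. deriv g x * v)"
      using holomorphic_derivI[OF g assms(2)]
      by (intro directional_derivative_onI[where D="\<lambda>x u. deriv g x * u"])
        (simp_all add: has_field_derivative_def)
    moreover have "(\<lambda>x. deriv g x * v) holomorphic_on S"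
      by (rule holomorphic_on_mult[OF holomorphic_deriv[OF g assms(2)] holomorphic_on_const])
    ultimately show "\<exists>h\<in>{g. g holomorphic_on S}. directional_derivative_on S v g h"
      by (intro bexI[of _ "\<lambda>x. deriv g x * v"]) simp_all
  qed
  then show ?thesis
    using assms(1) by (intro smooth_onI[of f]) simp_all
qed

lemma directional_derivative_on_add:
  assumes "directional_derivative_on S v f f'" "directional_derivative_on S v g g'"
  shows "directional_derivative_on S v (\<lambda>x. f x + g x) (\<lambda>x. f' x + g' x)"
proof -
  obtain Df Dg where "\<And>x. x \<in> S \<Longrightarrow> (f has_derivative Df x) (at x)" "\<And>x. x \<in> S \<Longrightarrow> f' x = Df x v"
    "\<And>x. x \<in> S \<Longrightarrow> (g has_derivative Dg x) (at x)" "\<And>x. x \<in> S \<Longrightarrow> g' x = Dg x v"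
    using assms by (metis directional_derivative_onE)
  then show ?thesis
    by (intro directional_derivative_onI[where D="\<lambda>x u. Df x u + Dg x u"] has_derivative_add) simp_all
qed

lemma directional_derivative_on_mult:
  assumes "directional_derivative_on S v f f'" "directional_derivative_on S v g g'"
  shows "directional_derivative_on S v (\<lambda>x. f x * g x) (\<lambda>x. f x * g' x + f' x * g x)"
proof -
  obtain Df Dg where "\<And>x. x \<in> S \<Longrightarrow> (f has_derivative Df x) (at x)" "\<And>x. x \<in> S \<Longrightarrow> f' x = Df x v"
    "\<And>x. x \<in> S \<Longrightarrow> (g has_derivative Dg x) (at x)" "\<And>x. x \<in> S \<Longrightarrow> g' x = Dg x v"
    using assms by (metis directional_derivative_onE)
  then show ?thesis
    by (intro directional_derivative_onI[where D="\<lambda>x u. f x * Dg x u + Df x u * g x"] has_derivative_mult)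
      simp_all
qed

lemma directional_derivative_on_compose:
  assumes f: "directional_derivative_on S v f f'" and "f ` S \<subseteq> T"
    and g1: "directional_derivative_on T 1 g g1" and gi: "directional_derivative_on T \<i> g gi"
  shows "directional_derivative_on S v (\<lambda>x. g (f x))
           (\<lambda>x. of_real (Re (f' x)) * g1 (f x) + of_real (Im (f' x)) * gi (f x))"
proof -
  obtain Df where Df: "\<And>x. x \<in> S \<Longrightarrow> (f has_derivative Df x) (at x)" "\<And>x. x \<in> S \<Longrightarrow> f' x = Df x v"
    using f by (metis directional_derivative_onE)
  obtain Dg where Dg: "\<And>y. y \<in> T \<Longrightarrow> (g has_derivative Dg y) (at y)" "\<And>y. y \<in> T \<Longrightarrow> g1 y = Dg y 1"
    using g1 by (metis directional_derivative_onE)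
  obtain Dg' where Dg': "\<And>y. y \<in> T \<Longrightarrow> (g has_derivative Dg' y) (at y)" "\<And>y. y \<in> T \<Longrightarrow> gi y = Dg' y \<i>"
    using gi by (metis directional_derivative_onE)
  have Dg_decompose: "Dg y u = of_real (Re u) * g1 y + of_real (Im u) * gi y" if "y \<in> T" for y u
  proof -
    have "u = Re u *\<^sub>R 1 + Im u *\<^sub>R \<i>" by (simp add: complex_eq_iff)
    then have "Dg y u = Dg y (Re u *\<^sub>R 1 + Im u *\<^sub>R \<i>)" by (rule arg_cong)
    also have "\<dots> = Re u *\<^sub>R Dg y 1 + Im u *\<^sub>R Dg y \<i>"
      using has_derivative_linear[OF Dg(1)[OF that]] by (simp add: linear_add linear_scale)
    also have "\<dots> = Re u *\<^sub>R g1 y + Im u *\<^sub>R gi y"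
      using has_derivative_unique[OF Dg(1) Dg'(1)] Dg(2) Dg'(2) that by metis
    finally show ?thesis by (simp add: scaleR_conv_of_real)
  qed
  show ?thesis
  proof (rule directional_derivative_onI[where D="\<lambda>x u. Dg (f x) (Df x u)"])
    fix x assume x: "x \<in> S"
    then have "f x \<in> T" using assms(2) by blast
    show "((\<lambda>x. g (f x)) has_derivative (\<lambda>u. Dg (f x) (Df x u))) (at x)"
      by (rule has_derivative_compose[OF Df(1)[OF x] Dg(1)[OF \<open>f x \<in> T\<close>]])
    show "of_real (Re (f' x)) * g1 (f x) + of_real (Im (f' x)) * gi (f x) = Dg (f x) (Df x v)"
      by (simp add: Dg_decompose[OF \<open>f x \<in> T\<close>] Df(2)[OF x])
  qed
qed

text \<open>Closing the smooth maps under sums, products and composition yields again a smooth family;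
  this gives the closure properties of \<^const>\<open>smooth_on\<close> below.\<close>

inductive_set smooth_closure :: "complex set \<Rightarrow> (complex \<Rightarrow> complex) set" for S where
  smooth: "smooth_on S f \<Longrightarrow> f \<in> smooth_closure S"
| add: "f \<in> smooth_closure S \<Longrightarrow> g \<in> smooth_closure S \<Longrightarrow> (\<lambda>x. f x + g x) \<in> smooth_closure S"
| mult: "f \<in> smooth_closure S \<Longrightarrow> g \<in> smooth_closure S \<Longrightarrow> (\<lambda>x. f x * g x) \<in> smooth_closure S"
| compose: "f \<in> smooth_closure S \<Longrightarrow> smooth_on T g \<Longrightarrow> f ` S \<subseteq> T \<Longrightarrow>
    (\<lambda>x. g (f x)) \<in> smooth_closure S"

lemma smooth_family_smooth_closure: "smooth_family S (smooth_closure S)"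
proof (rule smooth_familyI)
  fix f v assume "f \<in> smooth_closure S"
  then show "\<exists>f'\<in>smooth_closure S. directional_derivative_on S v f f'"
  proof (induction arbitrary: v)
    case (smooth f)
    then obtain f' where "smooth_on S f'" "directional_derivative_on S v f f'"
      using smooth_on_directional_derivative by blast
    then show ?case by (intro bexI[of _ f'] smooth_closure.smooth)
  next
    case (add f g)
    then obtain f' g' where "f' \<in> smooth_closure S" "directional_derivative_on S v f f'"
      and "g' \<in> smooth_closure S" "directional_derivative_on S v g g'" by blast
    then show ?case
      by (intro bexI[of _ "\<lambda>x. f' x + g' x"] directional_derivative_on_add smooth_closure.add)
  next
    case (mult f g)
    then obtain f' g' where "f' \<in> smooth_closure S" "directional_derivative_on S v f f'"
      and "g' \<in> smooth_closure S" "directional_derivative_on S v g g'" by blast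
    then show ?case
      by (intro bexI[of _ "\<lambda>x. f x * g' x + f' x * g x"] directional_derivative_on_mult
          smooth_closure.add smooth_closure.mult mult.hyps)
  next
    case (compose f T g)
    obtain f' where f': "f' \<in> smooth_closure S" "directional_derivative_on S v f f'"
      using compose.IH by blast
    obtain g1 gi where g1: "smooth_on T g1" "directional_derivative_on T 1 g g1"
      and gi: "smooth_on T gi" "directional_derivative_on T \<i> g gi"
      using smooth_on_directional_derivative[OF compose.hyps(2)] by metis
    have "smooth_on UNIV (\<lambda>u. of_real (Re u))" "smooth_on UNIV (\<lambda>u. of_real (Im u))"
      by (intro bounded_linear_imp_smooth_on bounded_linear_compose[OF bounded_linear_of_real]
          bounded_linear_Re bounded_linear_Im)+
    then have "(\<lambda>x. of_real (Re (f' x)) * g1 (f x) + of_real (Im (f' x)) * gi (f x)) \<in> smooth_closure S"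
      using smooth_closure.compose[OF f'(1) _ subset_UNIV]
        smooth_closure.compose[OF compose.hyps(1) _ compose.hyps(3)] g1(1) gi(1)
      by (intro smooth_closure.add smooth_closure.mult) blast+
    with directional_derivative_on_compose[OF f'(2) compose.hyps(3) g1(2) gi(2)]
    show ?case by (rule bexI)
  qed
qed

lemma smooth_closure_imp_smooth_on: "f \<in> smooth_closure S \<Longrightarrow> smooth_on S f"
  by (rule smooth_onI[OF _ smooth_family_smooth_closure])

lemma smooth_on_add: "smooth_on S f \<Longrightarrow> smooth_on S g \<Longrightarrow> smooth_on S (\<lambda>x. f x + g x)"
  by (rule smooth_closure_imp_smooth_on[OF smooth_closure.add[OF smooth_closure.smooth smooth_closure.smooth]])

lemma smooth_on_mult: "smooth_on S f \<Longrightarrow> smooth_on S g \<Longrightarrow> smooth_on S (\<lambda>x. f x * g x)"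
  by (rule smooth_closure_imp_smooth_on[OF smooth_closure.mult[OF smooth_closure.smooth smooth_closure.smooth]])

lemma smooth_on_compose:
  "smooth_on S f \<Longrightarrow> smooth_on T g \<Longrightarrow> f ` S \<subseteq> T \<Longrightarrow> smooth_on S (\<lambda>x. g (f x))"
  by (rule smooth_closure_imp_smooth_on[OF smooth_closure.compose[OF smooth_closure.smooth]])

lemma smooth_on_diff:
  assumes "smooth_on S f" "smooth_on S g"
  shows "smooth_on S (\<lambda>x. f x - g x)"
  using smooth_on_add[OF assms(1) smooth_on_mult[OF smooth_on_const[of S "- 1"] assms(2)]] by simp

lemma smooth_on_inverse:
  assumes "smooth_on S f" "\<And>x. x \<in> S \<Longrightarrow> f x \<noteq> 0"
  shows "smooth_on S (\<lambda>x. inverse (f x))"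
proof (rule smooth_on_compose[OF assms(1)])
  show "smooth_on (- {0}) inverse"
    by (rule holomorphic_on_imp_smooth_on) (auto intro: holomorphic_intros)
qed (use assms(2) in auto)

lemma smooth_on_csqrt:
  assumes "smooth_on S f" "\<And>x. x \<in> S \<Longrightarrow> f x \<notin> \<real>\<^sub>\<le>\<^sub>0"
  shows "smooth_on S (\<lambda>x. csqrt (f x))"
proof (rule smooth_on_compose[OF assms(1)])
  show "smooth_on (- \<real>\<^sub>\<le>\<^sub>0) csqrt"
    by (rule holomorphic_on_imp_smooth_on[OF holomorphic_on_csqrt]) (simp add: open_Compl)
qed (use assms(2) in blast)

section \<open>A flat function and a smooth step\<close>

definition poly_exp_inv :: "real poly \<Rightarrow> real \<Rightarrow> real" where
  "poly_exp_inv p x = (if x \<le> 0 then 0 else poly p (1 / x) * exp (- (1 / x)))"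

lemma poly_exp_inv_nonpos: "x \<le> 0 \<Longrightarrow> poly_exp_inv p x = 0"
  by (simp add: poly_exp_inv_def)

lemma poly_exp_inv_1_pos: "x > 0 \<Longrightarrow> poly_exp_inv 1 x > 0"
  by (simp add: poly_exp_inv_def)

lemma poly_exp_inv_1_nonneg: "poly_exp_inv 1 x \<ge> 0"
  by (simp add: poly_exp_inv_def)

lemma poly_times_exp_neg_tendsto_0:
  fixes p :: "real poly"
  shows "((\<lambda>y. poly p y * exp (- y)) \<longlongrightarrow> 0) at_top"
proof -
  have "poly p y * exp (- y) = (\<Sum>i\<le>degree p. coeff p i * (y ^ i / exp y))" for y :: real
    by (simp add: poly_altdef exp_minus field_simps sum_divide_distrib)
  moreover have "((\<lambda>y. \<Sum>i\<le>degree p. coeff p i * (y ^ i / exp y)) \<longlongrightarrow> 0) at_top"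
    by (intro tendsto_null_sum tendsto_mult_right_zero tendsto_power_div_exp_0)
  ultimately show ?thesis by simp
qed

lemma poly_exp_inv_has_real_derivative_0: "(poly_exp_inv p has_real_derivative 0) (at 0)"
proof -
  have left: "((\<lambda>y. (poly_exp_inv p y - poly_exp_inv p 0) / (y - 0)) \<longlongrightarrow> 0) (at_left 0)"
    by (rule tendsto_eventually)
      (auto intro: eventually_mono[OF eventually_at_left_real[of "-1"]] simp: poly_exp_inv_def)
  have "((\<lambda>y. poly ([:0, 1:] * p) y * exp (- y)) \<longlongrightarrow> 0) at_top"
    by (rule poly_times_exp_neg_tendsto_0)
  moreover have "\<forall>\<^sub>F y in at_top. poly ([:0, 1:] * p) y * exp (- y) =
      (poly_exp_inv p (inverse y) - poly_exp_inv p 0) / (inverse y - 0)"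
    by (rule eventually_mono[OF eventually_gt_at_top[of 0]]) (auto simp: poly_exp_inv_def field_simps)
  ultimately have "((\<lambda>y. (poly_exp_inv p y - poly_exp_inv p 0) / (y - 0)) \<longlongrightarrow> 0) (at_right 0)"
    unfolding filterlim_at_right_to_top by (rule Lim_transform_eventually)
  with left show ?thesis
    unfolding has_field_derivative_iff by (rule filterlim_split_at)
qed

lemma poly_exp_inv_has_real_derivative:
  "(poly_exp_inv p has_real_derivative poly_exp_inv ([:0, 0, 1:] * (p - pderiv p)) x) (at x)"
proof (cases x "0 :: real" rule: linorder_cases)
  case less
  have "((\<lambda>x. 0) has_real_derivative 0) (at x)" by simp
  then have "(poly_exp_inv p has_real_derivative 0) (at x)"
    by (rule has_field_derivative_transform_within_open[of _ _ _ "{..<0}"])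
      (use less in \<open>auto simp: poly_exp_inv_def\<close>)
  then show ?thesis using less by (simp add: poly_exp_inv_def)
next
  case equal
  then show ?thesis using poly_exp_inv_has_real_derivative_0 by (simp add: poly_exp_inv_def)
next
  case greater
  have "((\<lambda>x. poly p (1 / x) * exp (- (1 / x))) has_real_derivative
      poly (pderiv p) (1 / x) * (- 1 / x\<^sup>2) * exp (- (1 / x)) + poly p (1 / x) * (exp (- (1 / x)) * (1 / x\<^sup>2)))
      (at x)"
    using greater
    by (auto intro!: derivative_eq_intros DERIV_chain2[OF poly_DERIV] simp: power2_eq_square field_simps)
  also have "poly (pderiv p) (1 / x) * (- 1 / x\<^sup>2) * exp (- (1 / x)) + poly p (1 / x) * (exp (- (1 / x)) * (1 / x\<^sup>2))
      = poly_exp_inv ([:0, 0, 1:] * (p - pderiv p)) x"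
    using greater by (simp add: poly_exp_inv_def field_simps power2_eq_square)
  finally show ?thesis
    by (rule has_field_derivative_transform_within_open[of _ _ _ "{0<..}"])
      (use greater in \<open>auto simp: poly_exp_inv_def\<close>)
qed

lemma derivative_closed_imp_smooth_on:
  assumes R: "\<And>b. b \<in> R \<Longrightarrow> \<exists>b'\<in>R. \<forall>x. (b has_real_derivative b' x) (at x)" and "b \<in> R"
  shows "smooth_on S (\<lambda>z. of_real (b (Re z)))"
proof -
  define G :: "(complex \<Rightarrow> complex) set" where "G = {\<lambda>z. of_real (b (Re z) * c) |b c. b \<in> R}"
  have "smooth_family S G"
  proof (rule smooth_familyI)
    fix g v assume "g \<in> G"
    then obtain b c where "b \<in> R" and g: "g = (\<lambda>z. of_real (b (Re z) * c))"
      unfolding G_def by blast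
    then obtain b' where "b' \<in> R" and b': "\<And>x. (b has_real_derivative b' x) (at x)"
      using R by blast
    have "directional_derivative_on S v g (\<lambda>z. of_real (b' (Re z) * (c * Re v)))"
    proof (rule directional_derivative_onI[where D="\<lambda>z u. of_real (Re u * b' (Re z) * c)"])
      fix z
      have "((\<lambda>z. b (Re z)) has_derivative (\<lambda>u. Re u * b' (Re z))) (at z)"
        using DERIV_compose_FDERIV[OF b' has_derivative_Re[OF has_derivative_ident]] by simp
      then show "(g has_derivative (\<lambda>u. of_real (Re u * b' (Re z) * c))) (at z)"
        unfolding g by (intro has_derivative_of_real has_derivative_mult_left)
    qed simp
    moreover have "(\<lambda>z. of_real (b' (Re z) * (c * Re v))) \<in> G"
      unfolding G_def using \<open>b' \<in> R\<close> by blast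
    ultimately show "\<exists>h\<in>G. directional_derivative_on S v g h"
      by blast
  qed
  moreover have "(\<lambda>z. of_real (b (Re z) * 1)) \<in> G"
    unfolding G_def using assms(2) by blast
  ultimately show ?thesis
    by (auto intro: smooth_onI)
qed

lemma smooth_on_poly_exp_inv:
  assumes "smooth_on S (\<lambda>x. of_real (u x))"
  shows "smooth_on S (\<lambda>x. of_real (poly_exp_inv p (u x)))"
proof -
  have "smooth_on UNIV (\<lambda>z. of_real (poly_exp_inv p (Re z)))"
    using poly_exp_inv_has_real_derivative by (intro derivative_closed_imp_smooth_on[of "range poly_exp_inv"]) auto
  from smooth_on_compose[OF assms this] show ?thesis by simp
qed

definition smooth_step :: "real \<Rightarrow> real \<Rightarrow> real \<Rightarrow> real" where
  "smooth_step a b x = poly_exp_inv 1 (b - x) / (poly_exp_inv 1 (b - x) + poly_exp_inv 1 (x - a))"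

lemma smooth_step_denominator_pos:
  assumes "a < b"
  shows "poly_exp_inv 1 (b - x) + poly_exp_inv 1 (x - a) > 0"
proof (cases "x < b")
  case True
  then show ?thesis using poly_exp_inv_1_pos[of "b - x"] poly_exp_inv_1_nonneg[of "x - a"] by simp
next
  case False
  then show ?thesis using assms poly_exp_inv_1_pos[of "x - a"] poly_exp_inv_1_nonneg[of "b - x"] by simp
qed

lemma smooth_step_nonneg: "a < b \<Longrightarrow> 0 \<le> smooth_step a b x"
  using smooth_step_denominator_pos poly_exp_inv_1_nonneg by (simp add: smooth_step_def)

lemma smooth_step_le_1: "a < b \<Longrightarrow> smooth_step a b x \<le> 1"
  using smooth_step_denominator_pos poly_exp_inv_1_nonneg by (simp add: smooth_step_def)

lemma smooth_step_eq_1: "a < b \<Longrightarrow> x \<le> a \<Longrightarrow> smooth_step a b x = 1"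
  using poly_exp_inv_1_pos[of "b - x"] by (simp add: smooth_step_def poly_exp_inv_nonpos)

lemma smooth_step_eq_0: "b \<le> x \<Longrightarrow> smooth_step a b x = 0"
  by (simp add: smooth_step_def poly_exp_inv_nonpos)

lemma smooth_on_smooth_step:
  assumes "a < b" and u: "smooth_on S (\<lambda>x. of_real (u x))"
  shows "smooth_on S (\<lambda>x. of_real (smooth_step a b (u x)))"
proof -
  have "smooth_on S (\<lambda>x. of_real (b - u x))" "smooth_on S (\<lambda>x. of_real (u x - a))"
    using smooth_on_diff[OF smooth_on_const u] smooth_on_diff[OF u smooth_on_const] by simp_all
  then have num: "smooth_on S (\<lambda>x. of_real (poly_exp_inv 1 (b - u x)))"
    and den: "smooth_on S (\<lambda>x. of_real (poly_exp_inv 1 (b - u x)) + of_real (poly_exp_inv 1 (u x - a)))"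
    by (simp_all add: smooth_on_poly_exp_inv smooth_on_add)
  have "of_real (poly_exp_inv 1 (b - u x)) + of_real (poly_exp_inv 1 (u x - a)) \<noteq> (0 :: complex)" for x
    using smooth_step_denominator_pos[OF \<open>a < b\<close>, of "u x"] by (metis of_real_add of_real_eq_0_iff less_irrefl)
  then have "smooth_on S (\<lambda>x. of_real (poly_exp_inv 1 (b - u x)) *
      inverse (of_real (poly_exp_inv 1 (b - u x)) + of_real (poly_exp_inv 1 (u x - a))))"
    by (intro smooth_on_mult[OF num] smooth_on_inverse[OF den])
  then show ?thesis
    by (simp add: smooth_step_def divide_inverse)
qed

section \<open>Pushing the punctured disc outwards\<close>

definition pushed_norm_sq :: "real \<Rightarrow> real \<Rightarrow> real \<Rightarrow> real" where
  "pushed_norm_sq r \<rho> s = s + smooth_step (r\<^sup>2) (\<rho>\<^sup>2) s * (r\<^sup>2 - s)"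

definition push_out :: "real \<Rightarrow> real \<Rightarrow> complex \<Rightarrow> complex" where
  "push_out r \<rho> w = w * csqrt (of_real (pushed_norm_sq r \<rho> ((norm w)\<^sup>2) / (norm w)\<^sup>2))"

lemma pushed_norm_sq_ge:
  assumes "0 < r" "r < \<rho>"
  shows "r\<^sup>2 \<le> pushed_norm_sq r \<rho> s"
proof (cases "s < r\<^sup>2")
  case True
  have "r\<^sup>2 < \<rho>\<^sup>2" using assms by (simp add: power_strict_mono)
  with True show ?thesis by (simp add: pushed_norm_sq_def smooth_step_eq_1)
next
  case False
  have "r\<^sup>2 < \<rho>\<^sup>2" using assms by (simp add: power_strict_mono)
  with False have "0 \<le> (1 - smooth_step (r\<^sup>2) (\<rho>\<^sup>2) s) * (s - r\<^sup>2)"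
    by (intro mult_nonneg_nonneg) (simp_all add: smooth_step_le_1)
  then show ?thesis by (simp add: pushed_norm_sq_def algebra_simps)
qed

lemma pushed_norm_sq_less_1:
  assumes "0 < r" "r < \<rho>" "\<rho> < 1" "s < 1"
  shows "pushed_norm_sq r \<rho> s < 1"
proof -
  define t where "t = smooth_step (r\<^sup>2) (\<rho>\<^sup>2) s"
  have "r\<^sup>2 < \<rho>\<^sup>2" "r\<^sup>2 < 1" using assms by (simp_all add: power_strict_mono power_less_one_iff)
  then have "0 \<le> t" "t \<le> 1" unfolding t_def by (simp_all add: smooth_step_nonneg smooth_step_le_1)
  then have "t * (r\<^sup>2 - s) \<le> max 0 (r\<^sup>2 - s)"
    by (cases "0 \<le> r\<^sup>2 - s") (auto simp: mult_left_le_one_le mult_nonneg_nonpos)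
  then show ?thesis
    using \<open>r\<^sup>2 < 1\<close> \<open>s < 1\<close> by (auto simp: pushed_norm_sq_def t_def[symmetric] max_def split: if_splits)
qed

lemma pushed_norm_sq_eq: "\<rho>\<^sup>2 \<le> s \<Longrightarrow> pushed_norm_sq r \<rho> s = s"
  by (simp add: pushed_norm_sq_def smooth_step_eq_0)

lemma norm_push_out:
  assumes "0 < r" "r < \<rho>" "w \<noteq> 0"
  shows "norm (push_out r \<rho> w) = sqrt (pushed_norm_sq r \<rho> ((norm w)\<^sup>2))"
proof -
  define m where "m = pushed_norm_sq r \<rho> ((norm w)\<^sup>2)"
  have "0 < m" unfolding m_def using pushed_norm_sq_ge[OF assms(1,2)] assms(1)
    by (meson order_less_le_trans zero_less_power)
  then have "0 < m / (norm w)\<^sup>2" using assms(3) by simp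
  then have "norm (csqrt (of_real (m / (norm w)\<^sup>2))) = sqrt (m / (norm w)\<^sup>2)"
    by (simp only: norm_csqrt norm_of_real abs_of_pos)
  then have "norm (push_out r \<rho> w) = sqrt ((norm w)\<^sup>2) * sqrt (m / (norm w)\<^sup>2)"
    by (simp add: push_out_def m_def norm_mult)
  also have "\<dots> = sqrt ((norm w)\<^sup>2 * (m / (norm w)\<^sup>2))"
    by (simp only: real_sqrt_mult)
  also have "\<dots> = sqrt m"
    using assms(3) by simp
  finally show ?thesis unfolding m_def .
qed

lemma norm_push_out_ge: "0 < r \<Longrightarrow> r < \<rho> \<Longrightarrow> w \<noteq> 0 \<Longrightarrow> r \<le> norm (push_out r \<rho> w)"
  by (simp add: norm_push_out pushed_norm_sq_ge real_le_rsqrt)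

lemma push_out_in_punctured_disc:
  assumes "0 < r" "r < \<rho>" "\<rho> < 1" "w \<in> ball 0 1 - {0}"
  shows "push_out r \<rho> w \<in> ball 0 1 - {0}"
proof -
  have "(norm w)\<^sup>2 < 1" using assms(4) by (simp add: power_less_one_iff)
  then have "norm (push_out r \<rho> w) < 1"
    using assms by (simp add: norm_push_out pushed_norm_sq_less_1)
  moreover have "push_out r \<rho> w \<noteq> 0"
    using norm_push_out_ge[OF assms(1,2)] assms(1,4) by force
  ultimately show ?thesis by simp
qed

lemma push_out_eq_self:
  assumes "0 < \<rho>" "\<rho> \<le> norm w"
  shows "push_out r \<rho> w = w"
proof -
  have "\<rho>\<^sup>2 \<le> (norm w)\<^sup>2" using assms by (simp add: power_mono)
  moreover have "w \<noteq> 0" using assms by auto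
  ultimately show ?thesis by (simp add: push_out_def pushed_norm_sq_eq)
qed

lemma smooth_on_push_out:
  assumes "0 < r" "r < \<rho>"
  shows "smooth_on (- {0}) (push_out r \<rho>)"
proof -
  define s where "s w = (norm w)\<^sup>2" for w :: complex
  have "smooth_on (- {0}) (\<lambda>w. w * cnj w)"
    by (intro smooth_on_mult bounded_linear_imp_smooth_on bounded_linear_ident bounded_linear_cnj)
  then have s: "smooth_on (- {0}) (\<lambda>w. of_real (s w))"
    unfolding s_def complex_norm_square .
  then have "smooth_on (- {0}) (\<lambda>w. of_real (smooth_step (r\<^sup>2) (\<rho>\<^sup>2) (s w)))"
    using assms by (intro smooth_on_smooth_step) (simp_all add: power_strict_mono)
  then have "smooth_on (- {0}) (\<lambda>w. of_real (s w) +
      of_real (smooth_step (r\<^sup>2) (\<rho>\<^sup>2) (s w)) * (of_real (r\<^sup>2) - of_real (s w)))"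
    by (intro smooth_on_add[OF s] smooth_on_mult smooth_on_diff[OF smooth_on_const s])
  then have "smooth_on (- {0}) (\<lambda>w. of_real (pushed_norm_sq r \<rho> (s w)) * inverse (of_real (s w)))"
    by (intro smooth_on_mult smooth_on_inverse[OF s]) (simp_all add: pushed_norm_sq_def s_def)
  then have q: "smooth_on (- {0}) (\<lambda>w. of_real (pushed_norm_sq r \<rho> (s w) / s w))"
    by (simp add: divide_inverse)
  have "of_real (pushed_norm_sq r \<rho> (s w) / s w) \<notin> \<real>\<^sub>\<le>\<^sub>0" if "w \<in> - {0}" for w
  proof -
    have "0 < pushed_norm_sq r \<rho> (s w)"
      using pushed_norm_sq_ge[OF assms] assms(1) by (meson order_less_le_trans zero_less_power)
    then have "0 < pushed_norm_sq r \<rho> (s w) / s w"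
      using that by (intro divide_pos_pos) (simp_all add: s_def)
    then show ?thesis
      by (simp add: complex_nonpos_Reals_iff del: of_real_divide)
  qed
  then have "smooth_on (- {0}) (\<lambda>w. csqrt (of_real (pushed_norm_sq r \<rho> (s w) / s w)))"
    by (rule smooth_on_csqrt[OF q])
  then show ?thesis
    unfolding push_out_def[abs_def] s_def[symmetric]
    by (rule smooth_on_mult[OF bounded_linear_imp_smooth_on[OF bounded_linear_ident]])
qed

section \<open>Conjugation by a Riemann map\<close>

lemma Riemann_mapping_centred:
  assumes "open S" "simply_connected S" "S \<noteq> UNIV" "a \<in> S"
  obtains f g where "f holomorphic_on S" "g holomorphic_on ball 0 1"
    "\<And>z. z \<in> S \<Longrightarrow> f z \<in> ball 0 1 \<and> g (f z) = z"
    "\<And>w. w \<in> ball 0 1 \<Longrightarrow> g w \<in> S \<and> f (g w) = w"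
    "f a = 0"
proof -
  obtain f0 g0 where f0: "f0 holomorphic_on S" and g0: "g0 holomorphic_on ball 0 1"
    and f0g0: "\<And>z. z \<in> S \<Longrightarrow> f0 z \<in> ball 0 1 \<and> g0 (f0 z) = z"
    and g0f0: "\<And>w. w \<in> ball 0 1 \<Longrightarrow> g0 w \<in> S \<and> f0 (g0 w) = w"
    using Riemann_mapping_theorem[of S] assms by blast
  obtain M N where "M (f0 a) = 0" and M: "M holomorphic_on ball 0 1" "M ` ball 0 1 \<subseteq> ball 0 1"
    and N: "N holomorphic_on ball 0 1" "N ` ball 0 1 \<subseteq> ball 0 1"
    and MN: "\<And>w. w \<in> ball 0 1 \<Longrightarrow> M (N w) = w" and NM: "\<And>w. w \<in> ball 0 1 \<Longrightarrow> N (M w) = w"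
    using ball_biholomorphism_exists[of "f0 a"] f0g0[OF \<open>a \<in> S\<close>] by metis
  show ?thesis
  proof
    have "f0 ` S \<subseteq> ball 0 1" using f0g0 by blast
    then show "(\<lambda>z. M (f0 z)) holomorphic_on S"
      using holomorphic_on_compose_gen[OF f0 M(1)] by (simp add: o_def)
    show "(\<lambda>w. g0 (N w)) holomorphic_on ball 0 1"
      using holomorphic_on_compose_gen[OF N(1) g0 N(2)] by (simp add: o_def)
    show "M (f0 z) \<in> ball 0 1 \<and> g0 (N (M (f0 z))) = z" if "z \<in> S" for z
      using f0g0[OF that] M(2) NM by (simp add: image_subset_iff)
    show "g0 (N w) \<in> S \<and> M (f0 (g0 (N w))) = w" if "w \<in> ball 0 1" for w
      using g0f0 MN N(2) that by (simp add: image_subset_iff)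
  qed fact
qed

lemma compact_in_ball_imp_in_smaller_ball:
  fixes K :: "'a :: real_normed_vector set"
  assumes "compact K" "K \<subseteq> ball 0 1"
  obtains r where "0 < r" "r < 1" "K \<subseteq> ball 0 r"
proof (cases "K = {}")
  case True
  then show ?thesis using that[of "1 / 2"] by simp
next
  case False
  obtain k0 where "k0 \<in> K" and k0: "\<And>k. k \<in> K \<Longrightarrow> norm k \<le> norm k0"
    using continuous_attains_sup[OF assms(1) False continuous_on_norm_id] by blast
  have "norm k0 < 1" using assms(2) \<open>k0 \<in> K\<close> by auto
  show ?thesis
  proof (rule that[of "(norm k0 + 1) / 2"])
    show "0 < (norm k0 + 1) / 2"
      by (simp add: add_nonneg_pos)
    show "(norm k0 + 1) / 2 < 1"
      using \<open>norm k0 < 1\<close> by (simp add: field_simps)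
    show "K \<subseteq> ball 0 ((norm k0 + 1) / 2)"
      using k0 \<open>norm k0 < 1\<close> by (fastforce simp: subset_iff)
  qed
qed

lemma inverse_maps_punctured:
  assumes fg: "\<And>z. z \<in> S \<Longrightarrow> f z \<in> ball 0 1 \<and> g (f z) = z"
    and "a \<in> S" "f a = 0" "z \<in> S - {a}"
  shows "f z \<in> ball 0 1 - {0}"
proof -
  have "z \<in> S" "z \<noteq> a" using assms(4) by auto
  have "f z \<noteq> f a"
  proof
    assume "f z = f a"
    then have "g (f z) = g (f a)" by simp
    then show False using fg \<open>z \<in> S\<close> \<open>a \<in> S\<close> \<open>z \<noteq> a\<close> by simp
  qed
  then show ?thesis using fg \<open>z \<in> S\<close> \<open>f a = 0\<close> by simp
qed

lemma biholomorphic_conjugate: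
  assumes "open S" "f holomorphic_on S" "g holomorphic_on ball 0 1"
    and fg: "\<And>z. z \<in> S \<Longrightarrow> f z \<in> ball 0 1 \<and> g (f z) = z"
    and gf: "\<And>w. w \<in> ball 0 1 \<Longrightarrow> g w \<in> S \<and> f (g w) = w"
    and "a \<in> S" "f a = 0"
    and \<Psi>: "smooth_on (- {0}) \<Psi>" "\<And>w. w \<in> ball 0 1 - {0} \<Longrightarrow> \<Psi> w \<in> ball 0 1 - {0}"
  shows "smooth_on (S - {a}) (\<lambda>z. g (\<Psi> (f z)))"
    and "(\<lambda>z. g (\<Psi> (f z))) ` (S - {a}) \<subseteq> S - {a}"
proof -
  have f_punctured: "f z \<in> ball 0 1 - {0}" if "z \<in> S - {a}" for z
    using inverse_maps_punctured[OF fg \<open>a \<in> S\<close> \<open>f a = 0\<close> that] .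
  have f: "smooth_on (S - {a}) f"
    using assms(1) by (intro holomorphic_on_imp_smooth_on[OF holomorphic_on_subset[OF assms(2)]]) auto
  have "f z \<in> - {0}" if "z \<in> S - {a}" for z
    using f_punctured[OF that] by simp
  then have \<Psi>f: "smooth_on (S - {a}) (\<lambda>z. \<Psi> (f z))"
    by (intro smooth_on_compose[OF f \<Psi>(1)] image_subsetI)
  have "\<Psi> (f z) \<in> ball 0 1" if "z \<in> S - {a}" for z
    using \<Psi>(2)[OF f_punctured[OF that]] by simp
  moreover have "smooth_on (ball 0 1) g"
    using assms(3) by (rule holomorphic_on_imp_smooth_on) simp
  ultimately show "smooth_on (S - {a}) (\<lambda>z. g (\<Psi> (f z)))"
    by (intro smooth_on_compose[OF \<Psi>f] image_subsetI)
  show "(\<lambda>z. g (\<Psi> (f z))) ` (S - {a}) \<subseteq> S - {a}"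
    using f_punctured \<Psi>(2) gf \<open>f a = 0\<close> by (fastforce simp: image_subset_iff)
qed

lemma Riemann_map_large_near_frontier:
  assumes "open S" "g holomorphic_on ball 0 1"
    and fg: "\<And>z. z \<in> S \<Longrightarrow> f z \<in> ball 0 1 \<and> g (f z) = z"
    and gf: "\<And>w. w \<in> ball 0 1 \<Longrightarrow> g w \<in> S"
    and "\<rho> < 1"
  obtains U where "open U" "frontier S \<subseteq> U" "\<And>z. z \<in> S \<inter> U \<Longrightarrow> \<rho> < norm (f z)"
proof
  have "cball 0 \<rho> \<subseteq> ball (0 :: complex) 1" using \<open>\<rho> < 1\<close> by auto
  then have "compact (g ` cball 0 \<rho>)"
    using holomorphic_on_imp_continuous_on[OF assms(2)]
    by (intro compact_continuous_image compact_cball) (rule continuous_on_subset)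
  then show "open (- (g ` cball 0 \<rho>))" by (simp add: compact_imp_closed open_Compl)
  show "frontier S \<subseteq> - (g ` cball 0 \<rho>)"
    using gf \<open>cball 0 \<rho> \<subseteq> ball 0 1\<close> frontier_disjoint_eq[of S] \<open>open S\<close> by fastforce
  show "\<rho> < norm (f z)" if "z \<in> S \<inter> - (g ` cball 0 \<rho>)" for z
    using fg that by (force simp: not_le[symmetric])
qed

lemma conjugate_push_out:
  assumes "open S" "f holomorphic_on S" "g holomorphic_on ball 0 1"
    and fg: "\<And>z. z \<in> S \<Longrightarrow> f z \<in> ball 0 1 \<and> g (f z) = z"
    and gf: "\<And>w. w \<in> ball 0 1 \<Longrightarrow> g w \<in> S \<and> f (g w) = w"
    and "a \<in> S" "f a = 0" "0 < r" "r < 1"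
  defines "\<kappa> \<equiv> \<lambda>z. g (push_out r ((r + 1) / 2) (f z))"
  shows "smooth_on (S - {a}) \<kappa>" "\<kappa> ` (S - {a}) \<subseteq> S - {a}"
    and "\<exists>U. open U \<and> frontier S \<subseteq> U \<and> (\<forall>z \<in> (S \<inter> U) - {a}. \<kappa> z = z)"
    and "\<And>z. z \<in> S - {a} \<Longrightarrow> r \<le> norm (f (\<kappa> z))"
proof -
  define \<rho> where "\<rho> = (r + 1) / 2"
  have "r < \<rho>" "\<rho> < 1" using \<open>r < 1\<close> by (simp_all add: \<rho>_def)
  have \<Psi>: "smooth_on (- {0}) (push_out r \<rho>)"
    "\<And>w. w \<in> ball 0 1 - {0} \<Longrightarrow> push_out r \<rho> w \<in> ball 0 1 - {0}"
    using smooth_on_push_out push_out_in_punctured_disc \<open>0 < r\<close> \<open>r < \<rho>\<close> \<open>\<rho> < 1\<close> by blast+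
  show "smooth_on (S - {a}) \<kappa>" "\<kappa> ` (S - {a}) \<subseteq> S - {a}"
    unfolding \<kappa>_def \<rho>_def[symmetric] using biholomorphic_conjugate[OF assms(1-7) \<Psi>] by blast+
  obtain U where "open U" "frontier S \<subseteq> U" and U: "\<And>z. z \<in> S \<inter> U \<Longrightarrow> \<rho> < norm (f z)"
    using Riemann_map_large_near_frontier[OF \<open>open S\<close> assms(3)] fg gf \<open>\<rho> < 1\<close> by blast
  moreover have "\<kappa> z = z" if "z \<in> S \<inter> U" for z
    using U[OF that] fg that \<open>0 < r\<close> \<open>r < \<rho>\<close>
    by (simp add: \<kappa>_def \<rho>_def[symmetric] push_out_eq_self less_imp_le)
  ultimately show "\<exists>U. open U \<and> frontier S \<subseteq> U \<and> (\<forall>z \<in> (S \<inter> U) - {a}. \<kappa> z = z)"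
    by blast
  show "r \<le> norm (f (\<kappa> z))" if "z \<in> S - {a}" for z
  proof -
    have "f z \<in> ball 0 1 - {0}"
      using inverse_maps_punctured[OF fg \<open>a \<in> S\<close> \<open>f a = 0\<close> that] .
    then show ?thesis
      using \<Psi>(2) gf norm_push_out_ge[OF \<open>0 < r\<close> \<open>r < \<rho>\<close>] by (simp add: \<kappa>_def \<rho>_def[symmetric])
  qed
qed

theorem lemma3p1:
  fixes Sigma Omega K :: "complex set" and z0 :: complex
  assumes "closed Sigma"
    and "bounded Omega" and "open Omega" and "simply_connected Omega"
    and "z0 \<in> Omega" and "z0 \<notin> Sigma"
    and "compact K" and "K \<subseteq> Omega"
  shows "\<exists>\<kappa> :: complex \<Rightarrow> complex.
           smooth_on (Omega - {z0}) \<kappa> \<and>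
           \<kappa> ` (Omega - {z0}) \<subseteq> Omega - {z0} \<and>
           (\<exists>U. open U \<and> frontier Omega \<subseteq> U \<and> (\<forall>z \<in> (Omega \<inter> U) - {z0}. \<kappa> z = z)) \<and>
           \<kappa> ` (Sigma \<inter> Omega) \<inter> K = {}"
proof -
  have "Omega \<noteq> UNIV" using \<open>bounded Omega\<close> not_bounded_UNIV by blast
  then obtain F G where F: "F holomorphic_on Omega" and G: "G holomorphic_on ball 0 1"
    and FG: "\<And>z. z \<in> Omega \<Longrightarrow> F z \<in> ball 0 1 \<and> G (F z) = z"
    and GF: "\<And>w. w \<in> ball 0 1 \<Longrightarrow> G w \<in> Omega \<and> F (G w) = w" and "F z0 = 0"
    using Riemann_mapping_centred[of Omega z0] assms(3-5) by metis
  have "compact (F ` K)"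
    using holomorphic_on_imp_continuous_on[OF holomorphic_on_subset[OF F \<open>K \<subseteq> Omega\<close>]] \<open>compact K\<close>
    by (rule compact_continuous_image)
  then obtain r where "0 < r" "r < 1" and K: "F ` K \<subseteq> ball 0 r"
    using compact_in_ball_imp_in_smaller_ball FG \<open>K \<subseteq> Omega\<close> by blast
  note \<kappa> = conjugate_push_out[OF \<open>open Omega\<close> F G FG GF \<open>z0 \<in> Omega\<close> \<open>F z0 = 0\<close> \<open>0 < r\<close> \<open>r < 1\<close>]
  have "(\<lambda>z. G (push_out r ((r + 1) / 2) (F z))) ` (Sigma \<inter> Omega) \<inter> K = {}"
    using \<kappa>(4) K \<open>z0 \<notin> Sigma\<close> by fastforce
  with \<kappa>(1-3) show ?thesis by blast
qed

end
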